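(* Let $f\ge0$ be integrable on $[-\pi,\pi]$ with $\int f>0$ and such that $\lim_{n\to\infty}\sigma_{n+1}^2(f)/\sigma_n^2(f)=1$. If $t(\lambda)$ is a nonnegative trigonometric polynomial, then $$\liminf_{n\to\infty}\frac{\sigma_n^2(ft)}{\sigma_n^2(f)}\ge t(0).$$
   Context: For a nonnegative integrable weight $w$ on $[-\pi,\pi]$, $\sigma_n^2(w)=\min_{q\in\mathcal{Q}_n(1)}\int_{-\pi}^{\pi}|q(e^{i\lambda})|^2w(\lambda)\,d\lambda$, where $\mathcal{Q}_n(1)$ is the set of complex polynomials of degree at most $n$ with $q(1)=1$ (the variance of the BLUE of a constant mean from $n+1$ observations of a stationary process with spectral density $w$). *)

theory Defs
  imports "HOL-Analysis.Analysis" "HOL-Computational_Algebra.Polynomial"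
begin

definition sigma2 :: "(real \<Rightarrow> real) \<Rightarrow> nat \<Rightarrow> real" where
  "sigma2 w n = Inf {LBINT x:{-pi..pi}. (cmod (poly q (cis x)))\<^sup>2 * w x
                     | q :: complex poly. degree q \<le> n \<and> poly q 1 = 1}"

definition trig_poly :: "(real \<Rightarrow> real) \<Rightarrow> bool" where
  "trig_poly t \<longleftrightarrow> (\<exists>m (a :: nat \<Rightarrow> real) (b :: nat \<Rightarrow> real).
      \<forall>x. t x = (\<Sum>k\<le>m. a k * cos (real k * x) + b k * sin (real k * x)))"

end

(* By the Fejer-Riesz theorem, t(x) = |h(e^{ix})|^2 for a complex polynomial h.
   If q is admissible for sigma_n^2(f t), then q h / h(1) is admissible for
   sigma_{n+k}^2(f), k = deg h, so t(0) sigma_{n+k}^2(f) <= sigma_n^2(f t); and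
   sigma_{n+k}^2(f) / sigma_n^2(f) -> 1 by the ratio hypothesis.

   Fejer-Riesz goes by induction on the degree of F, where t(x) = e^{-imx} F(e^{ix}).
   As t is real, the nonzero roots of F are symmetric under alpha |-> 1 / cnj alpha,
   and roots on the unit circle are double because t >= 0 has a minimum there;
   each pair of roots splits off a factor |e^{ix} - alpha|^2 of t. *)

theory Submission
  imports Defs "HOL-Complex_Analysis.Complex_Analysis"
    "HOL-Computational_Algebra.Fundamental_Theorem_Algebra"
begin

lemma cis_eq_imp_eq:
  assumes "cis a = cis b" "\<bar>a - b\<bar> < pi"
  shows "a = b"
proof -
  have "cis (a - b) = 1"
    using assms(1) by (simp add: cis_divide [symmetric])
  moreover have "Arg (cis (a - b)) = a - b"
    using assms(2) by (intro Arg_cis) auto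
  ultimately show ?thesis
    by (simp add: Arg_1)
qed

lemma infinite_range_cis: "infinite (range cis)"
proof
  assume "finite (range cis)"
  then have "finite (cis ` {-pi<..pi})"
    by (rule finite_subset [rotated]) auto
  moreover have "inj_on cis {-pi<..pi}"
    by (rule inj_on_inverseI [of _ Arg]) (rule Arg_cis)
  moreover have "infinite {-pi<..pi}"
    by (rule infinite_Ioc) simp
  ultimately show False
    using finite_imageD by blast
qed

lemma poly_eq_on_circle_imp_eq:
  fixes p q :: "complex poly"
  assumes "\<And>x. poly p (cis x) = poly q (cis x)"
  shows "p = q"
proof (rule ccontr)
  assume "p \<noteq> q"
  then have "finite {z. poly (p - q) z = 0}"
    by (intro poly_roots_finite) simp
  moreover have "range cis \<subseteq> {z. poly (p - q) z = 0}"
    using assms by auto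
  ultimately show False
    using infinite_range_cis finite_subset by blast
qed

definition laurent_on_circle :: "complex poly \<Rightarrow> int \<Rightarrow> real \<Rightarrow> complex" where
  "laurent_on_circle F m x = cis (- (of_int m * x)) * poly F (cis x)"

lemma laurent_on_circle_pCons_0:
  "laurent_on_circle (pCons 0 F) m x = laurent_on_circle F (m - 1) x"
proof -
  have "cis (- (of_int (m - 1) * x)) = cis (- (of_int m * x)) * cis x"
    by (simp add: cis_mult algebra_simps)
  then show ?thesis
    by (simp add: laurent_on_circle_def)
qed

lemma laurent_on_circle_has_vector_derivative:
  "(laurent_on_circle F m has_vector_derivative
     \<i> * cis (- (of_int m * x)) * (cis x * poly (pderiv F) (cis x) - of_int m * poly F (cis x))) (at x)"
proof -
  define \<Phi> where "\<Phi> w = exp (- (\<i> * of_int m * w)) * poly F (exp (\<i> * w))" for w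
  have "(\<Phi> has_field_derivative
          \<i> * cis (- (of_int m * x)) * (cis x * poly (pderiv F) (cis x) - of_int m * poly F (cis x)))
        (at (of_real x))"
    unfolding \<Phi>_def
    by (rule derivative_eq_intros DERIV_chain2 [OF poly_DERIV] refl | simp add: cis_conv_exp algebra_simps)+
  moreover have "(\<lambda>x. \<Phi> (of_real x)) = laurent_on_circle F m"
    by (simp add: fun_eq_iff \<Phi>_def laurent_on_circle_def cis_conv_exp mult.assoc)
  ultimately show ?thesis
    using has_vector_derivative_real_field by metis
qed

lemma isCont_laurent_on_circle: "isCont (laurent_on_circle F m) x"
  using laurent_on_circle_has_vector_derivative has_vector_derivative_continuous by blast

text \<open>On the circle \<open>cnj z = 1 / z\<close>, so realness says \<open>z\<^sup>a F(z) = z\<^sup>b R(z)\<close>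
  for the reflection \<open>R\<close> of \<open>cnj F\<close>; as an identity of polynomials this carries
  the root \<open>\<alpha>\<close> over to \<open>1 / cnj \<alpha>\<close>.\<close>

lemma laurent_on_circle_real_reflected_root:
  assumes real: "\<And>x. laurent_on_circle F m x \<in> \<real>"
    and "\<alpha> \<noteq> 0" and root: "poly F \<alpha> = 0"
  shows "poly F (inverse (cnj \<alpha>)) = 0"
proof -
  define R where "R = reflect_poly (map_poly cnj F)"
  define d where "d = degree (map_poly cnj F)"
  define a where "a = d + nat (- 2 * m)"
  define b where "b = nat (2 * m)"
  have "poly (monom 1 a * F) (cis x) = poly (monom 1 b * R) (cis x)" for x
  proof -
    have "cnj (laurent_on_circle F m x) = laurent_on_circle F m x"
      using real [of x] Reals_cnj_iff by blast
    then have eq: "cis (of_int m * x) * cnj (poly F (cis x)) = cis (- (of_int m * x)) * poly F (cis x)"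
      by (simp add: laurent_on_circle_def cis_cnj)
    have "cnj (poly F (cis x)) = cis (- (of_int m * x)) * (cis (of_int m * x) * cnj (poly F (cis x)))"
      by (simp add: mult.assoc [symmetric] cis_mult)
    also have "\<dots> = cis (- (of_int m * x)) * cis (- (of_int m * x)) * poly F (cis x)"
      by (simp add: eq mult.assoc)
    also have "\<dots> = cis (- (2 * of_int m * x)) * poly F (cis x)"
      by (simp add: cis_mult algebra_simps)
    finally have conj: "cnj (poly F (cis x)) = cis (- (2 * of_int m * x)) * poly F (cis x)" .
    have R: "poly R (cis x) = cis x ^ d * cnj (poly F (cis x))"
      unfolding R_def d_def
      by (simp add: poly_reflect_poly_nz poly_map_poly_cnj cis_inverse cis_cnj)
    have ab: "real (b + d) * x - 2 * of_int m * x = real a * x"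
      by (cases "m \<ge> 0") (simp_all add: a_def b_def algebra_simps)
    have "poly (monom 1 b * R) (cis x) = cis x ^ (b + d) * cis (- (2 * of_int m * x)) * poly F (cis x)"
      by (simp add: poly_monom R conj power_add mult.assoc)
    also have "\<dots> = cis (real a * x) * poly F (cis x)"
      by (simp add: Complex.DeMoivre cis_mult ab [symmetric])
    also have "\<dots> = poly (monom 1 a * F) (cis x)"
      by (simp add: poly_monom Complex.DeMoivre)
    finally show ?thesis ..
  qed
  then have "monom 1 a * F = monom 1 b * R"
    by (rule poly_eq_on_circle_imp_eq)
  then have "poly (monom 1 b * R) \<alpha> = 0"
    using root by (metis mult_zero_right poly_mult)
  then have "poly R \<alpha> = 0"
    using \<open>\<alpha> \<noteq> 0\<close> by (simp add: poly_monom)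
  then show ?thesis
    using \<open>\<alpha> \<noteq> 0\<close> unfolding R_def
    by (simp add: poly_reflect_poly_nz poly_map_poly_cnj)
qed

lemma laurent_on_circle_nonneg_root_pderiv:
  assumes nonneg: "\<And>x. laurent_on_circle F m x \<in> \<real>\<^sub>\<ge>\<^sub>0"
    and root: "poly F (cis \<theta>) = 0"
  shows "poly (pderiv F) (cis \<theta>) = 0"
proof -
  let ?E = "laurent_on_circle F m"
  define D where "D = \<i> * cis (- (of_int m * \<theta>)) * (cis \<theta> * poly (pderiv F) (cis \<theta>))"
  have deriv: "(?E has_vector_derivative D) (at \<theta>)"
    using laurent_on_circle_has_vector_derivative [of F m \<theta>] root by (simp add: D_def)
  have min: "?E \<theta> = 0" "\<And>y. 0 \<le> Re (?E y)" "\<And>y. Im (?E y) = 0"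
    using nonneg root by (auto simp: laurent_on_circle_def complex_nonneg_Reals_iff)
  have "Re D = 0"
    by (rule DERIV_local_min [OF has_field_derivative_Re [OF deriv], of 1]) (use min in auto)
  moreover have "Im D = 0"
    by (rule DERIV_local_min [OF has_field_derivative_Im [OF deriv], of 1]) (use min in auto)
  ultimately have "D = 0"
    by (simp add: complex_eq_iff)
  then show ?thesis
    by (simp add: D_def)
qed

lemma laurent_on_circle_nonneg_root_pair_dvd:
  assumes nonneg: "\<And>x. laurent_on_circle F m x \<in> \<real>\<^sub>\<ge>\<^sub>0"
    and "\<alpha> \<noteq> 0" and root: "poly F \<alpha> = 0"
  shows "[:-\<alpha>, 1:] * [:-inverse (cnj \<alpha>), 1:] dvd F"
proof -
  define \<beta> where "\<beta> = inverse (cnj \<alpha>)"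
  obtain G where G: "F = [:-\<alpha>, 1:] * G"
    using root by (metis dvdE poly_eq_0_iff_dvd)
  have "poly G \<beta> = 0"
  proof (cases "\<beta> = \<alpha>")
    case False
    have "poly F \<beta> = 0"
      unfolding \<beta>_def using nonneg \<open>\<alpha> \<noteq> 0\<close> root
      by (intro laurent_on_circle_real_reflected_root) (auto intro: nonneg_Reals_Real)
    with False show ?thesis
      by (simp add: G)
  next
    case True
    \<comment> \<open>\<open>\<alpha>\<close> lies on the unit circle, where \<open>F\<close> has a double root.\<close>
    have "\<alpha> * cnj \<alpha> = 1"
      using True \<open>\<alpha> \<noteq> 0\<close> by (simp add: \<beta>_def field_simps)
    then have "cmod \<alpha> * cmod \<alpha> = 1"
      by (metis complex_mod_cnj norm_mult norm_one)
    then have "cmod \<alpha> = 1"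
      by (metis abs_of_nonneg abs_square_eq_1 norm_ge_zero power2_eq_square)
    then have "cis (Arg \<alpha>) = \<alpha>"
      using cis_Arg [OF \<open>\<alpha> \<noteq> 0\<close>] by (simp add: sgn_div_norm)
    then have "poly (pderiv F) \<alpha> = 0"
      using laurent_on_circle_nonneg_root_pderiv [OF nonneg, of "Arg \<alpha>"] root by simp
    moreover have "pderiv F = [:-\<alpha>, 1:] * pderiv G + G"
      unfolding G pderiv_mult by (simp add: pderiv_pCons)
    ultimately show ?thesis
      using True by simp
  qed
  then have "[:-\<beta>, 1:] dvd G"
    by (simp add: poly_eq_0_iff_dvd)
  then show ?thesis
    unfolding G \<beta>_def by (rule mult_dvd_mono [OF dvd_refl])
qed

lemma laurent_on_circle_root_pair:
  assumes "\<alpha> \<noteq> 0"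
  shows "laurent_on_circle ([:-\<alpha>, 1:] * [:-inverse (cnj \<alpha>), 1:] * G) m x =
         of_real ((cmod (cis x - \<alpha>))\<^sup>2) * laurent_on_circle (smult (- inverse (cnj \<alpha>)) G) (m - 1) x"
proof -
  let ?z = "cis x"
  have norm2: "of_real ((cmod (?z - \<alpha>))\<^sup>2) = (?z - \<alpha>) * (cnj ?z - cnj \<alpha>)"
    by (subst complex_norm_square) simp
  have "of_real ((cmod (?z - \<alpha>))\<^sup>2) * ?z * (- inverse (cnj \<alpha>))
      = (?z - \<alpha>) * (- inverse (cnj \<alpha>)) * (?z * cnj ?z - ?z * cnj \<alpha>)"
    unfolding norm2 by (simp add: algebra_simps)
  also have "\<dots> = (?z - \<alpha>) * (?z - inverse (cnj \<alpha>))"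
    using \<open>\<alpha> \<noteq> 0\<close> by (simp add: cis_cnj cis_mult field_simps)
  finally have pair: "(?z - \<alpha>) * (?z - inverse (cnj \<alpha>))
      = of_real ((cmod (?z - \<alpha>))\<^sup>2) * ?z * (- inverse (cnj \<alpha>))" ..
  have shift: "cis (- (of_int (m - 1) * x)) = cis (- (of_int m * x)) * ?z"
    by (simp add: cis_mult algebra_simps)
  have poly_pair: "poly ([:-\<alpha>, 1:] * [:-inverse (cnj \<alpha>), 1:] * G) ?z
      = (?z - \<alpha>) * (?z - inverse (cnj \<alpha>)) * poly G ?z"
    by (simp add: algebra_simps)
  show ?thesis
    unfolding laurent_on_circle_def shift poly_pair pair by (simp add: mult_ac)
qed

lemma laurent_on_circle_nonneg_from_off_point:
  assumes "\<And>x. cis x \<noteq> \<alpha> \<Longrightarrow> laurent_on_circle F m x \<in> \<real>\<^sub>\<ge>\<^sub>0"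
  shows "laurent_on_circle F m x \<in> \<real>\<^sub>\<ge>\<^sub>0"
proof (cases "cis x = \<alpha>")
  case True
  have "cis y \<noteq> \<alpha>" if "y \<noteq> x" "dist y x < pi" for y
    using that cis_eq_imp_eq [of y x] True by (auto simp: dist_real_def)
  then have "eventually (\<lambda>y. laurent_on_circle F m y \<in> \<real>\<^sub>\<ge>\<^sub>0) (at x)"
    unfolding eventually_at using assms by (intro exI [of _ pi]) auto
  then show ?thesis
    using isCont_laurent_on_circle
    by (intro Lim_in_closed_set [OF closed_nonneg_Reals_complex]) (auto simp: isCont_def)
qed (use assms in blast)

lemma laurent_on_circle_nonneg_degree_0:
  assumes "degree F = 0" and nonneg: "\<And>x. laurent_on_circle F m x \<in> \<real>\<^sub>\<ge>\<^sub>0"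
  shows "\<exists>h. \<forall>x. laurent_on_circle F m x = of_real ((cmod (poly h (cis x)))\<^sup>2)"
proof -
  define c where "c = coeff F 0"
  have F: "F = [:c:]"
    using degree_0_id [OF assms(1)] by (simp add: c_def)
  have E: "laurent_on_circle F m x = cis (- (of_int m * x)) * c" for x
    by (simp add: laurent_on_circle_def F)
  have c: "c \<in> \<real>\<^sub>\<ge>\<^sub>0"
    using nonneg [of 0] by (simp add: E)
  have "c = 0" if "m \<noteq> 0"
  proof -
    have "cis (- pi) = -1"
      by (simp add: complex_eq_iff)
    then have "- c \<in> \<real>\<^sub>\<ge>\<^sub>0"
      using nonneg [of "pi / of_int m"] that by (simp add: E)
    with c show ?thesis
      by (auto simp: complex_nonneg_Reals_iff complex_eq_iff)
  qed
  then have const: "laurent_on_circle F m x = c" for x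
    unfolding E by (cases "m = 0") auto
  have sqrt: "of_real ((cmod (poly [:of_real (sqrt (Re c)):] (cis x)))\<^sup>2) = c" for x
    using c by (auto simp: complex_nonneg_Reals_iff complex_eq_iff)
  have "laurent_on_circle F m x = of_real ((cmod (poly [:of_real (sqrt (Re c)):] (cis x)))\<^sup>2)" for x
    by (simp only: const sqrt)
  then show ?thesis
    by blast
qed

lemma laurent_on_circle_nonneg_divide_root_pair:
  assumes nonneg: "\<And>x. laurent_on_circle ([:-\<alpha>, 1:] * [:-inverse (cnj \<alpha>), 1:] * G) m x \<in> \<real>\<^sub>\<ge>\<^sub>0"
    and "\<alpha> \<noteq> 0"
  shows "laurent_on_circle (smult (- inverse (cnj \<alpha>)) G) (m - 1) x \<in> \<real>\<^sub>\<ge>\<^sub>0"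
proof (rule laurent_on_circle_nonneg_from_off_point)
  fix y assume "cis y \<noteq> \<alpha>"
  then have "laurent_on_circle (smult (- inverse (cnj \<alpha>)) G) (m - 1) y =
      laurent_on_circle ([:-\<alpha>, 1:] * [:-inverse (cnj \<alpha>), 1:] * G) m y / of_real ((cmod (cis y - \<alpha>))\<^sup>2)"
    unfolding laurent_on_circle_root_pair [OF \<open>\<alpha> \<noteq> 0\<close>] by simp
  then show "laurent_on_circle (smult (- inverse (cnj \<alpha>)) G) (m - 1) y \<in> \<real>\<^sub>\<ge>\<^sub>0"
    using nonneg [of y] by (simp add: nonneg_Reals_divide_I)
qed

theorem fejer_riesz:
  assumes "\<And>x. laurent_on_circle F m x \<in> \<real>\<^sub>\<ge>\<^sub>0"
  shows "\<exists>h. \<forall>x. laurent_on_circle F m x = of_real ((cmod (poly h (cis x)))\<^sup>2)"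
  using assms
proof (induction "degree F" arbitrary: F m rule: less_induct)
  case less
  show ?case
  proof (cases "degree F = 0")
    case True
    then show ?thesis
      using less.prems by (rule laurent_on_circle_nonneg_degree_0)
  next
    case False
    then obtain \<alpha> where root: "poly F \<alpha> = 0"
      using alg_closed_imp_poly_has_root [of F] by auto
    show ?thesis
    proof (cases "\<alpha> = 0")
      case True
      obtain a G where "F = pCons a G"
        by (rule pCons_cases)
      with root True have F: "F = pCons 0 G"
        by simp
      have "degree G < degree F"
        using False by (cases "G = 0") (simp_all add: F)
      moreover have "\<And>x. laurent_on_circle G (m - 1) x \<in> \<real>\<^sub>\<ge>\<^sub>0"
        using less.prems by (simp add: F laurent_on_circle_pCons_0)
      ultimately show ?thesis
        using less.hyps by (simp add: F laurent_on_circle_pCons_0)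
    next
      case False
      obtain G where F: "F = [:-\<alpha>, 1:] * [:-inverse (cnj \<alpha>), 1:] * G"
        using laurent_on_circle_nonneg_root_pair_dvd [OF less.prems False root] by (elim dvdE)
      define G' where "G' = smult (- inverse (cnj \<alpha>)) G"
      have "G \<noteq> 0"
        using \<open>degree F \<noteq> 0\<close> F by auto
      then have "degree F = degree G + 2"
        unfolding F by (subst degree_mult_eq) (auto simp: degree_mult_eq)
      then have "degree G' < degree F"
        using False by (simp add: G'_def)
      moreover have "\<And>x. laurent_on_circle G' (m - 1) x \<in> \<real>\<^sub>\<ge>\<^sub>0"
        using less.prems False unfolding F G'_def by (rule laurent_on_circle_nonneg_divide_root_pair)
      ultimately obtain h where h: "\<forall>x. laurent_on_circle G' (m - 1) x = of_real ((cmod (poly h (cis x)))\<^sup>2)"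
        using less.hyps by blast
      have "laurent_on_circle F m x = of_real ((cmod (poly ([:-\<alpha>, 1:] * h) (cis x)))\<^sup>2)" for x
      proof -
        have "poly ([:-\<alpha>, 1:] * h) (cis x) = (cis x - \<alpha>) * poly h (cis x)"
          by (simp add: algebra_simps)
        then show ?thesis
          using h unfolding F G'_def laurent_on_circle_root_pair [OF False]
          by (simp only: norm_mult power_mult_distrib of_real_mult)
      qed
      then show ?thesis
        by blast
    qed
  qed
qed

lemma trig_poly_eq_laurent_on_circle:
  assumes "trig_poly t"
  obtains F m where "\<And>x. laurent_on_circle F m x = of_real (t x)"
proof -
  obtain M a b where t: "\<And>x. t x = (\<Sum>k\<le>M. a k * cos (real k * x) + b k * sin (real k * x))"
    using assms unfolding trig_poly_def by blast
  define c where "c k = (complex_of_real (a k) - \<i> * complex_of_real (b k)) / 2" for k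
  define F where "F = (\<Sum>k\<le>M. monom (c k) (M + k) + monom (cnj (c k)) (M - k))"
  have "laurent_on_circle F (int M) x = of_real (t x)" for x
  proof -
    have "laurent_on_circle F (int M) x
        = (\<Sum>k\<le>M. c k * (cis (- (real M * x)) * cis x ^ (M + k))
                  + cnj (c k) * (cis (- (real M * x)) * cis x ^ (M - k)))"
      unfolding laurent_on_circle_def F_def
      by (simp add: poly_sum poly_monom sum_distrib_left algebra_simps)
    also have "\<dots> = (\<Sum>k\<le>M. c k * cis (real k * x) + cnj (c k) * cis (- (real k * x)))"
      by (intro sum.cong refl)
        (simp add: Complex.DeMoivre cis_mult of_nat_diff algebra_simps)
    also have "\<dots> = (\<Sum>k\<le>M. of_real (a k * cos (real k * x) + b k * sin (real k * x)))"
      by (intro sum.cong refl) (simp add: c_def complex_eq_iff field_simps)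
    also have "\<dots> = of_real (t x)"
      by (simp add: t)
    finally show ?thesis .
  qed
  then show ?thesis
    using that by blast
qed

lemma nonneg_trig_poly_eq_norm_square:
  assumes "trig_poly t" and "\<And>x. 0 \<le> t x"
  obtains h :: "complex poly" where "\<And>x. t x = (cmod (poly h (cis x)))\<^sup>2"
proof -
  obtain F m where t: "\<And>x. laurent_on_circle F m x = of_real (t x)"
    using trig_poly_eq_laurent_on_circle [OF assms(1)] by blast
  then have "\<And>x. laurent_on_circle F m x \<in> \<real>\<^sub>\<ge>\<^sub>0"
    using assms(2) by simp
  then obtain h where "\<forall>x. laurent_on_circle F m x = of_real ((cmod (poly h (cis x)))\<^sup>2)"
    using fejer_riesz by blast
  then show ?thesis
    using that t by (metis of_real_eq_iff)
qed

lemma set_integral_nonneg: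
  fixes g :: "'a \<Rightarrow> real"
  assumes "\<And>x. x \<in> A \<Longrightarrow> 0 \<le> g x"
  shows "0 \<le> (LINT x:A|M. g x)"
  unfolding set_lebesgue_integral_def
  by (rule integral_nonneg_AE) (use assms in \<open>auto simp: indicator_def\<close>)

lemma le_sigma2I:
  assumes "\<And>q. degree q \<le> n \<Longrightarrow> poly q 1 = 1 \<Longrightarrow>
             c \<le> (LBINT x:{-pi..pi}. (cmod (poly q (cis x)))\<^sup>2 * w x)"
  shows "c \<le> sigma2 w n"
  unfolding sigma2_def
proof (rule cInf_greatest)
  have "(LBINT x:{-pi..pi}. (cmod (poly 1 (cis x)))\<^sup>2 * w x)
      \<in> {LBINT x:{-pi..pi}. (cmod (poly q (cis x)))\<^sup>2 * w x | q. degree q \<le> n \<and> poly q 1 = 1}"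
    by (intro CollectI exI [of _ 1]) simp
  then show "{LBINT x:{-pi..pi}. (cmod (poly q (cis x)))\<^sup>2 * w x | q. degree q \<le> n \<and> poly q 1 = 1} \<noteq> {}"
    by blast
qed (use assms in blast)

lemma sigma2_le:
  assumes "\<And>x. x \<in> {-pi..pi} \<Longrightarrow> 0 \<le> w x" and "degree q \<le> n" and "poly q 1 = 1"
  shows "sigma2 w n \<le> (LBINT x:{-pi..pi}. (cmod (poly q (cis x)))\<^sup>2 * w x)"
  unfolding sigma2_def
proof (rule cInf_lower)
  show "bdd_below {LBINT x:{-pi..pi}. (cmod (poly q (cis x)))\<^sup>2 * w x | q. degree q \<le> n \<and> poly q 1 = 1}"
    by (rule bdd_belowI [of _ 0]) (auto intro!: set_integral_nonneg mult_nonneg_nonneg assms(1))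
qed (use assms(2,3) in blast)

lemma sigma2_nonneg:
  assumes "\<And>x. x \<in> {-pi..pi} \<Longrightarrow> 0 \<le> w x"
  shows "0 \<le> sigma2 w n"
  by (rule le_sigma2I) (auto intro!: set_integral_nonneg mult_nonneg_nonneg assms)

lemma sigma2_mult_norm_square:
  assumes nonneg: "\<And>x. x \<in> {-pi..pi} \<Longrightarrow> 0 \<le> w x"
  shows "(cmod (poly h 1))\<^sup>2 * sigma2 w (n + degree h)
           \<le> sigma2 (\<lambda>x. w x * (cmod (poly h (cis x)))\<^sup>2) n"
proof (rule le_sigma2I)
  fix q :: "complex poly"
  assume q: "degree q \<le> n" "poly q 1 = 1"
  let ?c = "poly h 1"
  show "(cmod ?c)\<^sup>2 * sigma2 w (n + degree h)
          \<le> (LBINT x:{-pi..pi}. (cmod (poly q (cis x)))\<^sup>2 * (w x * (cmod (poly h (cis x)))\<^sup>2))"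
  proof (cases "?c = 0")
    case True
    then show ?thesis
      by (auto intro!: set_integral_nonneg mult_nonneg_nonneg nonneg)
  next
    case False
    define p where "p = smult (inverse ?c) (q * h)"
    have "degree p \<le> n + degree h"
      unfolding p_def using degree_mult_le [of q h] q(1) by simp
    moreover have "poly p 1 = 1"
      using False q(2) by (simp add: p_def)
    ultimately have "sigma2 w (n + degree h) \<le> (LBINT x:{-pi..pi}. (cmod (poly p (cis x)))\<^sup>2 * w x)"
      using nonneg by (intro sigma2_le)
    moreover have integrand: "(cmod (poly q (cis x)))\<^sup>2 * (w x * (cmod (poly h (cis x)))\<^sup>2)
        = (cmod ?c)\<^sup>2 * ((cmod (poly p (cis x)))\<^sup>2 * w x)" for x
    proof -
      have p: "cmod (poly p (cis x)) = cmod (poly q (cis x)) * cmod (poly h (cis x)) / cmod ?c"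
        by (simp add: p_def norm_mult norm_inverse divide_inverse mult.commute)
      show ?thesis
        unfolding p using False by (simp add: power_divide power_mult_distrib field_simps)
    qed
    ultimately show ?thesis
      unfolding integrand set_integral_mult_right by (simp add: mult_left_mono)
  qed
qed

lemma ratio_tendsto_1_imp_eventually_nonzero:
  fixes s :: "nat \<Rightarrow> 'a :: real_normed_field"
  assumes "(\<lambda>n. s (Suc n) / s n) \<longlonglongrightarrow> 1"
  shows "eventually (\<lambda>n. s n \<noteq> 0) sequentially"
proof -
  have "eventually (\<lambda>n. s (Suc n) / s n \<noteq> 0) sequentially"
    using tendsto_imp_eventually_ne [OF assms, of 0] by simp
  then show ?thesis
    by (rule eventually_mono) auto
qed

lemma ratio_shift_tendsto_1:
  fixes s :: "nat \<Rightarrow> 'a :: real_normed_field"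
  assumes ratio: "(\<lambda>n. s (Suc n) / s n) \<longlonglongrightarrow> 1"
  shows "(\<lambda>n. s (n + k) / s n) \<longlonglongrightarrow> 1"
proof -
  obtain N where N: "\<And>n. n \<ge> N \<Longrightarrow> s n \<noteq> 0"
    using ratio_tendsto_1_imp_eventually_nonzero [OF ratio] unfolding eventually_sequentially by blast
  show ?thesis
  proof (induction k)
    case 0
    have "eventually (\<lambda>n. 1 = s (n + 0) / s n) sequentially"
      using eventually_ge_at_top [of N] by (rule eventually_mono) (simp add: N)
    then show ?case
      by (rule Lim_transform_eventually [OF tendsto_const])
  next
    case (Suc k)
    have "(\<lambda>n. s (Suc (n + k)) / s (n + k) * (s (n + k) / s n)) \<longlonglongrightarrow> 1 * 1"
      using LIMSEQ_ignore_initial_segment [OF ratio, of k] Suc.IH by (intro tendsto_mult) simp_all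
    moreover have "eventually (\<lambda>n. s (Suc (n + k)) / s (n + k) * (s (n + k) / s n) = s (n + Suc k) / s n)
        sequentially"
      using eventually_ge_at_top [of N] by (rule eventually_mono) (simp add: N)
    ultimately show ?case
      using Lim_transform_eventually by fastforce
  qed
qed

lemma Liminf_ge_if_tendsto_le:
  fixes f g :: "'a \<Rightarrow> real"
  assumes "(f \<longlongrightarrow> a) F" and "eventually (\<lambda>x. f x \<le> g x) F" and "F \<noteq> bot"
  shows "ereal a \<le> Liminf F (\<lambda>x. ereal (g x))"
proof -
  have "Liminf F (\<lambda>x. ereal (f x)) = ereal a"
    using assms(1,3) by (intro lim_imp_Liminf) auto
  moreover have "Liminf F (\<lambda>x. ereal (f x)) \<le> Liminf F (\<lambda>x. ereal (g x))"
    using assms(2) by (intro Liminf_mono) (auto elim: eventually_mono)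
  ultimately show ?thesis
    by simp
qed

theorem lemma5p1:
  fixes f t :: "real \<Rightarrow> real"
  assumes f_nonneg: "\<forall>x\<in>{-pi..pi}. f x \<ge> 0"
    and f_int: "set_integrable lborel {-pi..pi} f"
    and f_pos: "(LBINT x:{-pi..pi}. f x) > 0"
    and ratio: "(\<lambda>n. sigma2 f (Suc n) / sigma2 f n) \<longlonglongrightarrow> 1"
    and t_trig: "trig_poly t"
    and t_nonneg: "\<forall>x. t x \<ge> 0"
  shows "liminf (\<lambda>n. ereal (sigma2 (\<lambda>x. f x * t x) n / sigma2 f n)) \<ge> ereal (t 0)"
proof -
  obtain h where t: "\<And>x. t x = (cmod (poly h (cis x)))\<^sup>2"
    using nonneg_trig_poly_eq_norm_square t_trig t_nonneg by blast
  have f_nonneg': "\<And>x. x \<in> {-pi..pi} \<Longrightarrow> 0 \<le> f x"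
    using f_nonneg by blast
  have bound: "t 0 * sigma2 f (n + degree h) \<le> sigma2 (\<lambda>x. f x * t x) n" for n
    using sigma2_mult_norm_square [OF f_nonneg', where h = h and n = n] by (simp add: t)
  have "0 \<le> sigma2 f n" for n
    using f_nonneg' by (rule sigma2_nonneg)
  then have "eventually (\<lambda>n. 0 < sigma2 f n) sequentially"
    using ratio_tendsto_1_imp_eventually_nonzero [OF ratio] by (auto elim: eventually_mono simp: less_le)
  then have "eventually (\<lambda>n. t 0 * (sigma2 f (n + degree h) / sigma2 f n)
      \<le> sigma2 (\<lambda>x. f x * t x) n / sigma2 f n) sequentially"
    by (rule eventually_mono) (use divide_right_mono [OF bound] in fastforce)
  moreover have "(\<lambda>n. t 0 * (sigma2 f (n + degree h) / sigma2 f n)) \<longlonglongrightarrow> t 0"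
    using tendsto_mult [OF tendsto_const ratio_shift_tendsto_1 [OF ratio]] by simp
  ultimately show ?thesis
    by (intro Liminf_ge_if_tendsto_le) simp_all
qed

end
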